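(* Let $A\in\mathbb{C}^{m\times n}$ and let $A^{(1)}\in\mathbb{C}^{n\times m}$ satisfy $AA^{(1)}A=A$. Then the following are equivalent: (1) $A^{\mathfrak{m}}$ exists; (2) $A^{\sim}A+I_n-A^{(1)}A$ is nonsingular; (3) $AA^{\sim}+I_m-AA^{(1)}$ is nonsingular. In this case, $$A^{\mathfrak{m}}=\left(A(A^{\sim}A+I_n-A^{(1)}A)^{-1}\right)^{\sim}=\left((AA^{\sim}+I_m-AA^{(1)})^{-1}A\right)^{\sim}.$$
   Context: For a positive integer $k$, the Minkowski metric matrix of order $k$ is $G_k=\mathrm{diag}(1,-I_{k-1})$ (with $G_1=(1)$). For $M\in\mathbb{C}^{p\times q}$, the Minkowski adjoint is $M^{\sim}=G_qM^*G_p$, where $M^*$ is the conjugate transpose. The Minkowski inverse of $A\in\mathbb{C}^{m\times n}$, denoted $A^{\mathfrak{m}}$, is a matrix $X\in\mathbb{C}^{n\times m}$ with $AXA=A$, $XAX=X$, $(AX)^{\sim}=AX$, $(XA)^{\sim}=XA$ (unique if it exists). *)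

theory Defs
  imports "Jordan_Normal_Form.Gauss_Jordan_Elimination"
begin

definition minkowski_G :: "nat \<Rightarrow> complex mat" where
  "minkowski_G k = mat k k (\<lambda>(i,j). if i = j then (if i = 0 then 1 else -1) else 0)"

definition conj_trans :: "complex mat \<Rightarrow> complex mat" where
  "conj_trans M = mat (dim_col M) (dim_row M) (\<lambda>(i,j). cnj (M $$ (j,i)))"

definition mink_adj :: "complex mat \<Rightarrow> complex mat" where
  "mink_adj M = minkowski_G (dim_col M) * conj_trans M * minkowski_G (dim_row M)"

definition is_mink_inverse :: "complex mat \<Rightarrow> complex mat \<Rightarrow> bool" where
  "is_mink_inverse A X \<longleftrightarrow> X \<in> carrier_mat (dim_col A) (dim_row A) \<and>
     A * X * A = A \<and> X * A * X = X \<and>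
     mink_adj (A * X) = A * X \<and> mink_adj (X * A) = X * A"

end

theory Submission
  imports Defs "Jordan_Normal_Form.Determinant"
begin

(* Write P = I - A1 A for the projector onto the kernel of A (A1 the given inner inverse), so that
   A P = 0 and B = A~ A + P is the matrix of condition (2).
   If B C = C B = I, then B P = P gives C P = P, hence C A~ A = I - P and A C A~ A = A, while
   A B = A A~ A gives A A~ A C = A.  Any U with A A~ U = A = U A~ A and U A~ U = U has U~ as
   Minkowski inverse; for U = A C this yields (1) and the first formula.
   Conversely, if the Minkowski inverse X exists, C = I - X A + A1 A X X~ is a right inverse
   of B with (A C)~ = X.
   Condition (3) and the second formula follow by applying this to A~ and A1~: the Minkowski
   adjoint of the matrix in (3) is the matrix of (2) for A~. *)

lemma assoc_mult_mat_dims: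
  fixes A :: "'a :: semiring_0 mat"
  shows "dim_col A = dim_row B \<Longrightarrow> dim_col B = dim_row C \<Longrightarrow> A * B * C = A * (B * C)"
  by (rule assoc_mult_mat[of A "dim_row A" "dim_col A" B "dim_col B" C "dim_col C"]) auto

lemma mult_add_distrib_mat_dims:
  fixes A :: "'a :: semiring_0 mat"
  shows "dim_col A = dim_row B \<Longrightarrow> dim_row B = dim_row C \<Longrightarrow> dim_col B = dim_col C \<Longrightarrow>
    A * (B + C) = A * B + A * C"
  by (rule mult_add_distrib_mat[of A "dim_row A" "dim_col A" B "dim_col B"]) auto

lemma add_mult_distrib_mat_dims:
  fixes A :: "'a :: semiring_0 mat"
  shows "dim_col A = dim_row C \<Longrightarrow> dim_row A = dim_row B \<Longrightarrow> dim_col A = dim_col B \<Longrightarrow>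
    (A + B) * C = A * C + B * C"
  by (rule add_mult_distrib_mat[of A "dim_row A" "dim_col A" B C "dim_col C"]) auto

lemma mult_minus_distrib_mat_dims:
  fixes A :: "'a :: ring mat"
  shows "dim_col A = dim_row B \<Longrightarrow> dim_row B = dim_row C \<Longrightarrow> dim_col B = dim_col C \<Longrightarrow>
    A * (B - C) = A * B - A * C"
  by (rule mult_minus_distrib_mat[of A "dim_row A" "dim_col A" B "dim_col B"]) auto

lemma minus_mult_distrib_mat_dims:
  fixes A :: "'a :: ring mat"
  shows "dim_col A = dim_row C \<Longrightarrow> dim_row A = dim_row B \<Longrightarrow> dim_col A = dim_col B \<Longrightarrow>
    (A - B) * C = A * C - B * C"
  by (rule minus_mult_distrib_mat[of A "dim_row A" "dim_col A" B C "dim_col C"]) auto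

lemma dim_minkowski_G [simp]:
  "dim_row (minkowski_G k) = k" "dim_col (minkowski_G k) = k"
  unfolding minkowski_G_def by auto

lemma minkowski_G_squared: "minkowski_G k * minkowski_G k = 1\<^sub>m k"
proof (rule eq_matI)
  fix i j assume ij: "i < dim_row (1\<^sub>m k)" "j < dim_col (1\<^sub>m k)"
  let ?g = "if i = 0 then 1 else - 1 :: complex"
  have "(minkowski_G k * minkowski_G k) $$ (i, j) =
      (\<Sum>l\<in>{0..<k}. (if i = l then ?g else 0) * minkowski_G k $$ (l, j))"
    using ij by (auto simp: minkowski_G_def scalar_prod_def intro!: sum.cong)
  also have "\<dots> = (\<Sum>l\<in>{0..<k}. if l = i then ?g * minkowski_G k $$ (i, j) else 0)"
    by (rule sum.cong) auto
  also have "\<dots> = 1\<^sub>m k $$ (i, j)"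
    using ij by (auto simp: minkowski_G_def)
  finally show "(minkowski_G k * minkowski_G k) $$ (i, j) = 1\<^sub>m k $$ (i, j)" .
qed auto

lemma dim_conj_trans [simp]:
  "dim_row (conj_trans M) = dim_col M" "dim_col (conj_trans M) = dim_row M"
  unfolding conj_trans_def by auto

lemma conj_trans_conj_trans [simp]: "conj_trans (conj_trans M) = M"
  by (rule eq_matI) (auto simp: conj_trans_def)

lemma conj_trans_minkowski_G [simp]: "conj_trans (minkowski_G k) = minkowski_G k"
  by (rule eq_matI) (auto simp: conj_trans_def minkowski_G_def)

lemma conj_trans_one [simp]: "conj_trans (1\<^sub>m k) = 1\<^sub>m k"
  by (rule eq_matI) (auto simp: conj_trans_def)

lemma conj_trans_mult: "dim_col A = dim_row B \<Longrightarrow> conj_trans (A * B) = conj_trans B * conj_trans A"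
  by (rule eq_matI) (auto simp: conj_trans_def scalar_prod_def mult.commute)

lemma conj_trans_add:
  "dim_row A = dim_row B \<Longrightarrow> dim_col A = dim_col B \<Longrightarrow>
    conj_trans (A + B) = conj_trans A + conj_trans B"
  by (rule eq_matI) (auto simp: conj_trans_def)

lemma conj_trans_minus:
  "dim_row A = dim_row B \<Longrightarrow> dim_col A = dim_col B \<Longrightarrow>
    conj_trans (A - B) = conj_trans A - conj_trans B"
  by (rule eq_matI) (auto simp: conj_trans_def)

lemma dim_mink_adj [simp]:
  "dim_row (mink_adj M) = dim_col M" "dim_col (mink_adj M) = dim_row M"
  unfolding mink_adj_def by auto

lemma mink_adj_mink_adj [simp]: "mink_adj (mink_adj M) = M"
proof -
  let ?G = minkowski_G and ?p = "dim_row M" and ?q = "dim_col M"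
  have "mink_adj (mink_adj M) = ?G ?p * (?G ?p * M * ?G ?q) * ?G ?q"
    by (simp add: mink_adj_def conj_trans_mult assoc_mult_mat_dims)
  also have "\<dots> = (?G ?p * ?G ?p) * M * (?G ?q * ?G ?q)"
    by (simp add: assoc_mult_mat_dims)
  finally show ?thesis
    by (simp add: minkowski_G_squared)
qed

lemma mink_adj_mult:
  assumes "dim_col A = dim_row B"
  shows "mink_adj (A * B) = mink_adj B * mink_adj A"
proof -
  let ?G = minkowski_G
  have "mink_adj B * mink_adj A =
      ?G (dim_col B) * conj_trans B * (?G (dim_row B) * ?G (dim_row B)) * conj_trans A * ?G (dim_row A)"
    using assms by (simp add: mink_adj_def assoc_mult_mat_dims)
  also have "\<dots> = mink_adj (A * B)"
    using assms by (simp add: minkowski_G_squared mink_adj_def conj_trans_mult assoc_mult_mat_dims)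
  finally show ?thesis by simp
qed

lemma mink_adj_mult3:
  "dim_col A = dim_row B \<Longrightarrow> dim_col B = dim_row C \<Longrightarrow>
    mink_adj (A * B * C) = mink_adj C * mink_adj B * mink_adj A"
  by (simp add: mink_adj_mult assoc_mult_mat_dims)

lemma mink_adj_add:
  "dim_row A = dim_row B \<Longrightarrow> dim_col A = dim_col B \<Longrightarrow> mink_adj (A + B) = mink_adj A + mink_adj B"
  by (simp add: mink_adj_def conj_trans_add mult_add_distrib_mat_dims add_mult_distrib_mat_dims)

lemma mink_adj_minus:
  "dim_row A = dim_row B \<Longrightarrow> dim_col A = dim_col B \<Longrightarrow> mink_adj (A - B) = mink_adj A - mink_adj B"
  by (simp add: mink_adj_def conj_trans_minus mult_minus_distrib_mat_dims minus_mult_distrib_mat_dims)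

lemma mink_adj_one [simp]: "mink_adj (1\<^sub>m k) = 1\<^sub>m k"
  by (simp add: mink_adj_def minkowski_G_squared)

lemma invertible_mat_mat_inverse:
  fixes M :: "'a :: field mat"
  assumes M: "M \<in> carrier_mat n n" and inv: "invertible_mat M"
  shows "the (mat_inverse M) \<in> carrier_mat n n"
    and "M * the (mat_inverse M) = 1\<^sub>m n"
    and "the (mat_inverse M) * M = 1\<^sub>m n"
proof -
  from inv obtain B where MB: "M * B = 1\<^sub>m (dim_row M)" and BM: "B * M = 1\<^sub>m (dim_row B)"
    unfolding invertible_mat_def inverts_mat_def by auto
  have "B \<in> carrier_mat n n"
    using arg_cong[OF MB, of dim_col] arg_cong[OF BM, of dim_col] M by auto
  with M MB BM have "M \<in> Units (ring_mat TYPE('a) n undefined)"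
    by (auto simp: Units_def ring_mat_def)
  then obtain B' where "mat_inverse M = Some B'"
    using mat_inverse(1)[OF M] by fastforce
  with mat_inverse(2)[OF M this] show "the (mat_inverse M) \<in> carrier_mat n n"
    and "M * the (mat_inverse M) = 1\<^sub>m n" and "the (mat_inverse M) * M = 1\<^sub>m n"
    by auto
qed

lemma invertible_mat_right_inverse:
  fixes M :: "'a :: field mat"
  assumes "M \<in> carrier_mat n n" "C \<in> carrier_mat n n" "M * C = 1\<^sub>m n"
  shows "invertible_mat M"
  using assms mat_mult_left_right_inverse[OF assms]
  unfolding invertible_mat_def inverts_mat_def by (auto intro!: exI[of _ C])

lemma mat_inverse_right_inverse:
  fixes M :: "'a :: field mat"
  assumes M: "M \<in> carrier_mat n n" and C: "C \<in> carrier_mat n n" and MC: "M * C = 1\<^sub>m n"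
  shows "the (mat_inverse M) = C"
proof -
  note inv = invertible_mat_mat_inverse[OF M invertible_mat_right_inverse[OF M C MC]]
  have "the (mat_inverse M) = the (mat_inverse M) * (M * C)"
    using inv(1) by (simp add: MC)
  also have "\<dots> = C"
    using inv M C by (simp flip: assoc_mult_mat)
  finally show ?thesis .
qed

lemma mink_adj_right_inverse:
  assumes "N \<in> carrier_mat n n" "C \<in> carrier_mat n n" "C * N = 1\<^sub>m n"
  shows "mink_adj N * mink_adj C = 1\<^sub>m n"
proof -
  have "mink_adj N * mink_adj C = mink_adj (C * N)"
    using assms(1,2) by (simp add: mink_adj_mult)
  also have "\<dots> = 1\<^sub>m n"
    using assms(3) by simp
  finally show ?thesis .
qed

lemma invertible_mat_mink_adj_iff:
  assumes "M \<in> carrier_mat n n"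
  shows "invertible_mat (mink_adj M) \<longleftrightarrow> invertible_mat M"
proof -
  have adj: "invertible_mat (mink_adj N)" if N: "N \<in> carrier_mat n n" "invertible_mat N" for N
  proof (rule invertible_mat_right_inverse)
    note inv = invertible_mat_mat_inverse[OF N]
    show "mink_adj N * mink_adj (the (mat_inverse N)) = 1\<^sub>m n"
      by (rule mink_adj_right_inverse[OF N(1) inv(1,3)])
    show "mink_adj N \<in> carrier_mat n n" "mink_adj (the (mat_inverse N)) \<in> carrier_mat n n"
      using N(1) inv(1) by auto
  qed
  have "mink_adj M \<in> carrier_mat n n"
    using assms by auto
  then show ?thesis
    using adj[of M] adj[of "mink_adj M"] assms by auto
qed

lemma mat_inverse_mink_adj:
  assumes M: "M \<in> carrier_mat n n" and inv: "invertible_mat M"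
  shows "the (mat_inverse (mink_adj M)) = mink_adj (the (mat_inverse M))"
proof (rule mat_inverse_right_inverse)
  note inv = invertible_mat_mat_inverse[OF M inv]
  show "mink_adj M * mink_adj (the (mat_inverse M)) = 1\<^sub>m n"
    by (rule mink_adj_right_inverse[OF M inv(1,3)])
  show "mink_adj M \<in> carrier_mat n n" "mink_adj (the (mat_inverse M)) \<in> carrier_mat n n"
    using M inv(1) by auto
qed

lemma is_mink_inverse_mink_adj:
  assumes "is_mink_inverse A X"
  shows "is_mink_inverse (mink_adj A) (mink_adj X)"
proof -
  have [simp]: "dim_row X = dim_col A" "dim_col X = dim_row A"
    using assms by (auto simp: is_mink_inverse_def)
  have AXA: "A * X * A = A" and XAX: "X * A * X = X"
    and AX: "mink_adj (A * X) = A * X" and XA: "mink_adj (X * A) = X * A"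
    using assms by (auto simp: is_mink_inverse_def)
  have adj_AX: "mink_adj A * mink_adj X = X * A"
    using XA by (simp add: mink_adj_mult)
  have adj_XA: "mink_adj X * mink_adj A = A * X"
    using AX by (simp add: mink_adj_mult)
  show ?thesis
    unfolding is_mink_inverse_def
  proof (intro conjI)
    show "mink_adj A * mink_adj X * mink_adj A = mink_adj A"
      using arg_cong[OF AXA, of mink_adj] by (simp add: mink_adj_mult3)
    show "mink_adj X * mink_adj A * mink_adj X = mink_adj X"
      using arg_cong[OF XAX, of mink_adj] by (simp add: mink_adj_mult3)
    show "mink_adj (mink_adj A * mink_adj X) = mink_adj A * mink_adj X"
      using XA by (simp add: adj_AX)
    show "mink_adj (mink_adj X * mink_adj A) = mink_adj X * mink_adj A"
      using AX by (simp add: adj_XA)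
  qed (intro carrier_matI, simp_all)
qed

lemma ex_mink_inverse_mink_adj_iff:
  "(\<exists>X. is_mink_inverse (mink_adj A) X) \<longleftrightarrow> (\<exists>X. is_mink_inverse A X)"
  using is_mink_inverse_mink_adj[of A] is_mink_inverse_mink_adj[of "mink_adj A"] by auto

lemma is_mink_inverse_mink_adj_of_factors:
  assumes A: "A \<in> carrier_mat m n" and U: "U \<in> carrier_mat m n"
    and left: "A * mink_adj A * U = A" and right: "U * mink_adj A * A = A"
    and idem: "U * mink_adj A * U = U"
  shows "is_mink_inverse A (mink_adj U)"
proof -
  have [simp]: "dim_row A = m" "dim_col A = n" "dim_row U = m" "dim_col U = n"
    using A U by auto
  have right_adj: "mink_adj A * A * mink_adj U = mink_adj A"
    using arg_cong[OF right, of mink_adj] by (simp add: mink_adj_mult3)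
  have left_adj: "mink_adj U * A * mink_adj A = mink_adj A"
    using arg_cong[OF left, of mink_adj] by (simp add: mink_adj_mult3)
  have AX: "A * mink_adj U = U * mink_adj A"
  proof -
    have "A * mink_adj U = U * mink_adj A * A * mink_adj U"
      by (simp add: right)
    also have "\<dots> = U * (mink_adj A * A * mink_adj U)"
      by (simp add: assoc_mult_mat_dims)
    finally show ?thesis
      by (simp add: right_adj)
  qed
  have XA: "mink_adj U * A = mink_adj A * U"
  proof -
    have "mink_adj U * A = mink_adj U * (A * mink_adj A * U)"
      by (simp add: left)
    also have "\<dots> = (mink_adj U * A * mink_adj A) * U"
      by (simp add: assoc_mult_mat_dims)
    finally show ?thesis
      by (simp add: left_adj)
  qed
  show ?thesis
    unfolding is_mink_inverse_def
  proof (intro conjI)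
    show "A * mink_adj U * A = A"
      by (simp add: AX right)
    show "mink_adj U * A * mink_adj U = mink_adj U"
      using arg_cong[OF idem, of mink_adj] by (simp add: mink_adj_mult3)
    show "mink_adj (A * mink_adj U) = A * mink_adj U"
      by (simp add: AX mink_adj_mult)
    show "mink_adj (mink_adj U * A) = mink_adj U * A"
      by (simp add: XA mink_adj_mult)
  qed (intro carrier_matI, simp_all)
qed

lemma is_mink_inverse_of_two_sided_inverse:
  fixes A A1 C :: "complex mat"
  assumes A: "A \<in> carrier_mat m n" and A1: "A1 \<in> carrier_mat n m" and inner: "A * A1 * A = A"
    and C: "C \<in> carrier_mat n n"
    and BC: "(mink_adj A * A + 1\<^sub>m n - A1 * A) * C = 1\<^sub>m n"
    and CB: "C * (mink_adj A * A + 1\<^sub>m n - A1 * A) = 1\<^sub>m n"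
  shows "is_mink_inverse A (mink_adj (A * C))"
proof -
  have [simp]: "dim_row A = m" "dim_col A = n" "dim_row A1 = n" "dim_col A1 = m"
    "dim_row C = n" "dim_col C = n"
    using A A1 C by auto
  define P where "P = 1\<^sub>m n - A1 * A"
  have [simp]: "dim_row P = n" "dim_col P = n"
    by (simp_all add: P_def)
  have B_eq: "mink_adj A * A + 1\<^sub>m n - A1 * A = mink_adj A * A + P"
    unfolding P_def by (rule eq_matI) auto
  have AP: "A * P = 0\<^sub>m m n"
  proof -
    have "A * P = A - A * A1 * A"
      unfolding P_def by (simp add: mult_minus_distrib_mat_dims assoc_mult_mat_dims)
    then show ?thesis
      by (simp add: inner) (rule eq_matI; simp)
  qed
  have PP: "P * P = P"
  proof -
    have "(1\<^sub>m n - A1 * A) * P = P - A1 * (A * P)"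
      by (simp add: minus_mult_distrib_mat_dims assoc_mult_mat_dims)
    also have "\<dots> = P"
      by (simp add: AP) (rule eq_matI; simp)
    finally show ?thesis
      unfolding P_def[symmetric] .
  qed
  have left: "A * mink_adj A * A * C = A"
  proof -
    have AB: "A * (mink_adj A * A + P) = A * mink_adj A * A"
      by (simp add: mult_add_distrib_mat_dims assoc_mult_mat_dims AP)
        (rule eq_matI; simp)
    have "A = A * ((mink_adj A * A + P) * C)"
      using BC by (simp add: B_eq)
    also have "\<dots> = A * (mink_adj A * A + P) * C"
      by (simp add: assoc_mult_mat_dims)
    finally show ?thesis
      by (simp add: AB)
  qed
  have CP: "C * P = P"
  proof -
    have BP: "(mink_adj A * A + P) * P = P"
      by (simp add: add_mult_distrib_mat_dims assoc_mult_mat_dims AP PP) (rule eq_matI; simp)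
    have "C * P = C * ((mink_adj A * A + P) * P)"
      by (simp add: BP)
    also have "\<dots> = C * (mink_adj A * A + P) * P"
      by (simp add: assoc_mult_mat_dims)
    finally show ?thesis
      using CB by (simp add: B_eq)
  qed
  have right: "A * C * mink_adj A * A = A"
  proof -
    have "A = A * (C * (mink_adj A * A + P))"
      using CB by (simp add: B_eq)
    also have "\<dots> = A * C * mink_adj A * A + A * P"
      by (simp add: mult_add_distrib_mat_dims assoc_mult_mat_dims CP)
    also have "\<dots> = A * C * mink_adj A * A"
      by (simp add: AP) (rule eq_matI; simp)
    finally show ?thesis
      by simp
  qed
  show ?thesis
  proof (rule is_mink_inverse_mink_adj_of_factors[OF A])
    show "A * mink_adj A * (A * C) = A"
      using left by (simp add: assoc_mult_mat_dims)
    show "A * C * mink_adj A * (A * C) = A * C"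
      using right by (simp flip: assoc_mult_mat_dims)
  qed (use A C right in auto)
qed

lemma right_inverse_of_mink_inverse:
  fixes A A1 X :: "complex mat"
  assumes A: "A \<in> carrier_mat m n" and A1: "A1 \<in> carrier_mat n m" and inner: "A * A1 * A = A"
    and X: "is_mink_inverse A X"
  defines "C \<equiv> 1\<^sub>m n - X * A + A1 * A * X * mink_adj X"
  shows "C \<in> carrier_mat n n"
    and "(mink_adj A * A + 1\<^sub>m n - A1 * A) * C = 1\<^sub>m n"
    and "mink_adj (A * C) = X"
proof -
  have [simp]: "dim_row A = m" "dim_col A = n" "dim_row A1 = n" "dim_col A1 = m"
    "dim_row X = n" "dim_col X = m"
    using A A1 X by (auto simp: is_mink_inverse_def)
  have AXA: "A * X * A = A" and XAX: "X * A * X = X"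
    and AX: "mink_adj (A * X) = A * X" and XA: "mink_adj (X * A) = X * A"
    using X by (auto simp: is_mink_inverse_def)
  show C: "C \<in> carrier_mat n n"
    unfolding C_def by (intro carrier_matI) simp_all
  then have [simp]: "dim_row C = n" "dim_col C = n"
    by auto
  have adj_AAX: "mink_adj A * A * X = mink_adj A"
  proof -
    have "mink_adj A * A * X = mink_adj A * mink_adj (A * X)"
      by (simp add: AX assoc_mult_mat_dims)
    also have "\<dots> = mink_adj (A * X * A)"
      by (simp add: mink_adj_mult)
    finally show ?thesis
      by (simp add: AXA)
  qed
  have AC: "A * C = A * X * mink_adj X"
  proof -
    have "A * C = A - A * X * A + A * A1 * A * X * mink_adj X"
      unfolding C_def
      by (simp add: mult_add_distrib_mat_dims mult_minus_distrib_mat_dims assoc_mult_mat_dims)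
    also have "\<dots> = A - A + A * X * mink_adj X"
      by (simp only: AXA inner)
    finally show ?thesis
      by simp (rule eq_matI; simp)
  qed
  have adj_AAC: "mink_adj A * A * C = X * A"
  proof -
    have "mink_adj A * A * C = mink_adj A * A * X * mink_adj X"
      by (simp add: AC assoc_mult_mat_dims)
    also have "\<dots> = mink_adj (X * A)"
      by (simp add: adj_AAX mink_adj_mult)
    finally show ?thesis
      by (simp add: XA)
  qed
  have A1AC: "A1 * A * C = A1 * A * X * mink_adj X"
    by (simp add: AC assoc_mult_mat_dims)
  have "(mink_adj A * A + 1\<^sub>m n - A1 * A) * C = mink_adj A * A * C + C - A1 * A * C"
    by (simp add: add_mult_distrib_mat_dims minus_mult_distrib_mat_dims C_def)
  also have "\<dots> = 1\<^sub>m n"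
    unfolding adj_AAC A1AC by (rule eq_matI) (auto simp: C_def)
  finally show "(mink_adj A * A + 1\<^sub>m n - A1 * A) * C = 1\<^sub>m n" .
  have "mink_adj (A * C) = X * mink_adj (A * X)"
    by (simp add: AC mink_adj_mult3 mink_adj_mult)
  then show "mink_adj (A * C) = X"
    by (simp add: AX XAX flip: assoc_mult_mat_dims)
qed

lemma mink_inverse_via_adj_mult:
  fixes A A1 :: "complex mat"
  assumes A: "A \<in> carrier_mat m n" and A1: "A1 \<in> carrier_mat n m" and inner: "A * A1 * A = A"
  shows "(\<exists>X. is_mink_inverse A X) \<longleftrightarrow> invertible_mat (mink_adj A * A + 1\<^sub>m n - A1 * A)"
    and "is_mink_inverse A X \<Longrightarrow>
      X = mink_adj (A * the (mat_inverse (mink_adj A * A + 1\<^sub>m n - A1 * A)))"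
proof -
  define B where "B = mink_adj A * A + 1\<^sub>m n - A1 * A"
  have B: "B \<in> carrier_mat n n"
    using A A1 unfolding B_def by (intro carrier_matI) auto
  have forward: "invertible_mat B \<and> X = mink_adj (A * the (mat_inverse B))"
    if "is_mink_inverse A X" for X
  proof -
    note C = right_inverse_of_mink_inverse[OF A A1 inner that, folded B_def]
    show ?thesis
      using invertible_mat_right_inverse[OF B C(1,2)] mat_inverse_right_inverse[OF B C(1,2)] C(3)
      by simp
  qed
  have backward: "\<exists>X. is_mink_inverse A X" if "invertible_mat B"
    using invertible_mat_mat_inverse[OF B that]
      is_mink_inverse_of_two_sided_inverse[OF A A1 inner, of "the (mat_inverse B)", folded B_def]
    by blast
  show "(\<exists>X. is_mink_inverse A X) \<longleftrightarrow> invertible_mat (mink_adj A * A + 1\<^sub>m n - A1 * A)"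
    and "is_mink_inverse A X \<Longrightarrow>
      X = mink_adj (A * the (mat_inverse (mink_adj A * A + 1\<^sub>m n - A1 * A)))"
    using forward backward unfolding B_def by blast+
qed

lemma mink_inverse_via_mult_adj:
  fixes A A1 :: "complex mat"
  assumes A: "A \<in> carrier_mat m n" and A1: "A1 \<in> carrier_mat n m" and inner: "A * A1 * A = A"
  shows "(\<exists>X. is_mink_inverse A X) \<longleftrightarrow> invertible_mat (A * mink_adj A + 1\<^sub>m m - A * A1)"
    and "is_mink_inverse A X \<Longrightarrow>
      X = mink_adj (the (mat_inverse (A * mink_adj A + 1\<^sub>m m - A * A1)) * A)"
proof -
  have [simp]: "dim_row A = m" "dim_col A = n" "dim_row A1 = n" "dim_col A1 = m"
    using A A1 by auto
  define D where "D = A * mink_adj A + 1\<^sub>m m - A * A1"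
  have D: "D \<in> carrier_mat m m"
    unfolding D_def by (intro carrier_matI) simp_all
  have adj_D: "mink_adj D = mink_adj (mink_adj A) * mink_adj A + 1\<^sub>m m - mink_adj A1 * mink_adj A"
    by (simp add: D_def mink_adj_add mink_adj_minus mink_adj_mult)
  have adj_A: "mink_adj A \<in> carrier_mat n m" and adj_A1: "mink_adj A1 \<in> carrier_mat m n"
    by auto
  have adj_inner: "mink_adj A * mink_adj A1 * mink_adj A = mink_adj A"
    using arg_cong[OF inner, of mink_adj] by (simp add: mink_adj_mult3)
  note adj = mink_inverse_via_adj_mult[OF adj_A adj_A1 adj_inner, folded adj_D]
  show iff: "(\<exists>X. is_mink_inverse A X) \<longleftrightarrow> invertible_mat (A * mink_adj A + 1\<^sub>m m - A * A1)"
    using adj(1) ex_mink_inverse_mink_adj_iff[of A] invertible_mat_mink_adj_iff[OF D]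
    unfolding D_def by blast
  assume X: "is_mink_inverse A X"
  then have inv: "invertible_mat D"
    using iff unfolding D_def by blast
  have "mink_adj X = mink_adj (mink_adj A * mink_adj (the (mat_inverse D)))"
    using adj(2)[OF is_mink_inverse_mink_adj[OF X]] by (simp add: mat_inverse_mink_adj[OF D inv])
  also have "\<dots> = the (mat_inverse D) * A"
    using invertible_mat_mat_inverse(1)[OF D inv] by (simp flip: mink_adj_mult)
  finally show "X = mink_adj (the (mat_inverse (A * mink_adj A + 1\<^sub>m m - A * A1)) * A)"
    unfolding D_def[symmetric] by (metis mink_adj_mink_adj)
qed

theorem theorem6p3:
  fixes A A1 :: "complex mat" and m n :: nat
  assumes "A \<in> carrier_mat m n"
    and "A1 \<in> carrier_mat n m"
    and "A * A1 * A = A"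
  shows "((\<exists>X. is_mink_inverse A X) \<longleftrightarrow>
            invertible_mat (mink_adj A * A + 1\<^sub>m n - A1 * A))
       \<and> ((\<exists>X. is_mink_inverse A X) \<longleftrightarrow>
            invertible_mat (A * mink_adj A + 1\<^sub>m m - A * A1))
       \<and> (\<forall>X. is_mink_inverse A X \<longrightarrow>
            X = mink_adj (A * the (mat_inverse (mink_adj A * A + 1\<^sub>m n - A1 * A)))
          \<and> X = mink_adj (the (mat_inverse (A * mink_adj A + 1\<^sub>m m - A * A1)) * A))"
  using mink_inverse_via_adj_mult[OF assms] mink_inverse_via_mult_adj[OF assms] by blast

end
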